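(* Under the standing assumptions below, suppose there exists $m_1\in M$ such that $\phi\left(\left[\begin{smallmatrix} 1 & m_1\\ 0 & 0\end{smallmatrix}\right]\right)$ is a type 2 idempotent of $T'$. Then (a) $\phi$ maps every idempotent of the form $\left[\begin{smallmatrix} 1 & m\\ 0 & 0\end{smallmatrix}\right]$ ($m\in M$) to a type 2 idempotent; and (b) there exist a fixed element $a'_2\in M'$ and a map $v_2:M\to N'$ such that $\phi\left(\left[\begin{smallmatrix} 1 & m\\ 0 & 0\end{smallmatrix}\right]\right)=\left[\begin{smallmatrix} 0 & a'_2\\ v_2(m) & 1\end{smallmatrix}\right]$ for all $m\in M$.
   Context: All rings have an identity $1\neq 0$. Standing assumptions: $R,S,R',S'$ are rings whose only idempotents are $0$ and $1$; $M$ is an $R$-$S$-bimodule, $N$ an $S$-$R$-bimodule, $M'$ an $R'$-$S'$-bimodule, $N'$ an $S'$-$R'$-bimodule; $T=\left[\begin{smallmatrix} R & M\\ N & S\end{smallmatrix}\right]$ and $T'=\left[\begin{smallmatrix} R' & M'\\ N' & S'\end{smallmatrix}\right]$ are the Morita context rings with both Morita maps zero, i.e. the sets of formal matrices with entrywise addition and product $\left[\begin{smallmatrix} r & m\\ n & s\end{smallmatrix}\right]\left[\begin{smallmatrix} r' & m'\\ n' & s'\end{smallmatrix}\right]=\left[\begin{smallmatrix} rr' & rm'+ms'\\ nr'+sn' & ss'\end{smallmatrix}\right]$; and $\phi:T\to T'$ is a ring isomorphism. Under these assumptions every idempotent of $T$ (or $T'$) other than $0$ and $1$ has one of the forms $\left[\begin{smallmatrix}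 1 & m\\ n & 0\end{smallmatrix}\right]$ (called a type 1 idempotent) or $\left[\begin{smallmatrix} 0 & m\\ n & 1\end{smallmatrix}\right]$ (called a type 2 idempotent). *)

theory Defs
  imports Main
begin

definition bimodule ::
  "('r::ring_1 \<Rightarrow> 'm::ab_group_add \<Rightarrow> 'm) \<Rightarrow> ('m \<Rightarrow> 's::ring_1 \<Rightarrow> 'm) \<Rightarrow> bool" where
  "bimodule lact ract \<longleftrightarrow>
     (\<forall>r m m'. lact r (m + m') = lact r m + lact r m') \<and>
     (\<forall>r r' m. lact (r + r') m = lact r m + lact r' m) \<and>
     (\<forall>r r' m. lact (r * r') m = lact r (lact r' m)) \<and>
     (\<forall>m. lact 1 m = m) \<and>
     (\<forall>s m m'. ract (m + m') s = ract m s + ract m' s) \<and>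
     (\<forall>s s' m. ract m (s + s') = ract m s + ract m s') \<and>
     (\<forall>s s' m. ract m (s * s') = ract (ract m s) s') \<and>
     (\<forall>m. ract m 1 = m) \<and>
     (\<forall>r m s. lact r (ract m s) = ract (lact r m) s)"

definition only_trivial_idempotents :: "'a::ring_1 itself \<Rightarrow> bool" where
  "only_trivial_idempotents _ \<longleftrightarrow> (\<forall>e::'a. e * e = e \<longrightarrow> e = 0 \<or> e = 1)"

text \<open>Elements of the Morita context ring T = [[R, M],[N, S]] (zero Morita maps)
  are quadruples (r, m, n, s) standing for the matrix [[r, m],[n, s]].\<close>

type_synonym ('r,'m,'n,'s) mctx = "'r \<times> 'm \<times> 'n \<times> 's"

definition mc_add :: "('r::ring_1,'m::ab_group_add,'n::ab_group_add,'s::ring_1) mctx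
     \<Rightarrow> ('r,'m,'n,'s) mctx \<Rightarrow> ('r,'m,'n,'s) mctx" where
  "mc_add x y = (case x of (r,m,n,s) \<Rightarrow> case y of (r',m',n',s') \<Rightarrow>
      (r + r', m + m', n + n', s + s'))"

text \<open>Product [[r,m],[n,s]] [[r',m'],[n',s']] = [[rr', rm'+ms'],[nr'+sn', ss']].
  Arguments: lM (R on M), rM (S on M), lN (S on N), rN (R on N).\<close>

definition mc_mult ::
  "('r::ring_1 \<Rightarrow> 'm::ab_group_add \<Rightarrow> 'm) \<Rightarrow> ('m \<Rightarrow> 's::ring_1 \<Rightarrow> 'm) \<Rightarrow>
   ('s \<Rightarrow> 'n::ab_group_add \<Rightarrow> 'n) \<Rightarrow> ('n \<Rightarrow> 'r \<Rightarrow> 'n) \<Rightarrow>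
   ('r,'m,'n,'s) mctx \<Rightarrow> ('r,'m,'n,'s) mctx \<Rightarrow> ('r,'m,'n,'s) mctx" where
  "mc_mult lM rM lN rN x y = (case x of (r,m,n,s) \<Rightarrow> case y of (r',m',n',s') \<Rightarrow>
      (r * r', lM r m' + rM m s', rN n r' + lN s n', s * s'))"

definition mc_one :: "('r::ring_1,'m::ab_group_add,'n::ab_group_add,'s::ring_1) mctx" where
  "mc_one = (1, 0, 0, 1)"

definition mc_idem where
  "mc_idem lM rM lN rN e \<longleftrightarrow> mc_mult lM rM lN rN e e = e"

definition type2_idem where
  "type2_idem lM rM lN rN e \<longleftrightarrow> mc_idem lM rM lN rN e \<and>
     (\<exists>m n. e = (0, m, n, 1))"

definition ring_iso_mc where
  "ring_iso_mc lM rM lN rN lM' rM' lN' rN' \<phi> \<longleftrightarrow>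
     bij \<phi> \<and>
     (\<forall>x y. \<phi> (mc_add x y) = mc_add (\<phi> x) (\<phi> y)) \<and>
     (\<forall>x y. \<phi> (mc_mult lM rM lN rN x y) = mc_mult lM' rM' lN' rN' (\<phi> x) (\<phi> y)) \<and>
     \<phi> mc_one = mc_one"

end

theory Submission
  imports Defs
begin

(* Write E_m = [[1,m],[0,0]].  These matrices form a left-zero band:
   E_m E_m' = E_m' for all m, m'.  A ring isomorphism carries this identity over,
   so F_m = phi(E_m) satisfies F_m F_m' = F_m'; in particular every F_m is idempotent.
   If one of them, F_m1 = [[0,a],[b,1]], is of type 2, then for every m we have
   F_m1 F_m = F_m and F_m F_m1 = F_m1.  Comparing entries, the first equation forces
   the R'-entry of F_m to be 0; the second then forces its S'-entry to be 1 and
   its M'-entry to be a.  Hence F_m = [[0,a],[v(m),1]] for all m. *)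

lemma bimodule_zero_unit:
  assumes "bimodule lact ract"
  shows "lact 0 m = 0" and "lact r 0 = 0" and "ract m 0 = 0" and "ract 0 s = 0"
    and "lact 1 m = m" and "ract m 1 = m"
proof -
  have "lact (0 + 0) m = lact 0 m + lact 0 m"
    and "lact r (0 + 0) = lact r 0 + lact r 0"
    and "ract m (0 + 0) = ract m 0 + ract m 0"
    and "ract (0 + 0) s = ract 0 s + ract 0 s"
    using assms unfolding bimodule_def by (metis (no_types))+
  then show "lact 0 m = 0" "lact r 0 = 0" "ract m 0 = 0" "ract 0 s = 0" by simp_all
  show "lact 1 m = m" "ract m 1 = m" using assms unfolding bimodule_def by blast+
qed

lemma corner_idempotents_left_zero:
  assumes "bimodule lM rM" and "bimodule lN rN"
  shows "mc_mult lM rM lN rN (1, m, 0, 0) (1, m', 0, 0) = (1, m', 0, 0)"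
  by (simp add: mc_mult_def bimodule_zero_unit[OF assms(1)] bimodule_zero_unit[OF assms(2)])

lemma absorbed_by_type2:
  assumes bim: "bimodule lM rM"
    and ef: "mc_mult lM rM lN rN (0, a, b, 1) f = f"
    and fe: "mc_mult lM rM lN rN f (0, a, b, 1) = (0, a, b, 1)"
  shows "f = (0, a, fst (snd (snd f)), 1)"
proof -
  obtain r c d s where f: "f = (r, c, d, s)" by (cases f) auto
  from ef f have r: "r = 0" by (simp add: mc_mult_def)
  from fe f have s: "s = 1" and "lM r a + rM c 1 = a" by (simp_all add: mc_mult_def)
  with r have "c = a" by (simp add: bimodule_zero_unit[OF bim])
  with f r s show ?thesis by simp
qed

lemma iso_images_left_zero:
  assumes "bimodule lM rM" and "bimodule lN rN"
    and "ring_iso_mc lM rM lN rN lM' rM' lN' rN' \<phi>"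
  shows "mc_mult lM' rM' lN' rN' (\<phi> (1, m, 0, 0)) (\<phi> (1, m', 0, 0)) = \<phi> (1, m', 0, 0)"
proof -
  have "\<phi> (mc_mult lM rM lN rN (1, m, 0, 0) (1, m', 0, 0))
        = mc_mult lM' rM' lN' rN' (\<phi> (1, m, 0, 0)) (\<phi> (1, m', 0, 0))"
    using assms(3) unfolding ring_iso_mc_def by blast
  then show ?thesis by (simp add: corner_idempotents_left_zero[OF assms(1,2)])
qed

theorem lemma4p1:
  fixes lM :: "'r::{ring_1,zero_neq_one} \<Rightarrow> 'm::ab_group_add \<Rightarrow> 'm"
    and rM :: "'m \<Rightarrow> 's::{ring_1,zero_neq_one} \<Rightarrow> 'm"
    and lN :: "'s \<Rightarrow> 'n::ab_group_add \<Rightarrow> 'n"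
    and rN :: "'n \<Rightarrow> 'r \<Rightarrow> 'n"
    and lM' :: "'r2::{ring_1,zero_neq_one} \<Rightarrow> 'm2::ab_group_add \<Rightarrow> 'm2"
    and rM' :: "'m2 \<Rightarrow> 's2::{ring_1,zero_neq_one} \<Rightarrow> 'm2"
    and lN' :: "'s2 \<Rightarrow> 'n2::ab_group_add \<Rightarrow> 'n2"
    and rN' :: "'n2 \<Rightarrow> 'r2 \<Rightarrow> 'n2"
    and \<phi> :: "('r,'m,'n,'s) mctx \<Rightarrow> ('r2,'m2,'n2,'s2) mctx"
  assumes "only_trivial_idempotents TYPE('r)"
    and "only_trivial_idempotents TYPE('s)"
    and "only_trivial_idempotents TYPE('r2)"
    and "only_trivial_idempotents TYPE('s2)"
    and "bimodule lM rM" and "bimodule lN rN"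
    and "bimodule lM' rM'" and "bimodule lN' rN'"
    and "ring_iso_mc lM rM lN rN lM' rM' lN' rN' \<phi>"
    and "\<exists>m1. type2_idem lM' rM' lN' rN' (\<phi> (1, m1, 0, 0))"
  shows "(\<forall>m. type2_idem lM' rM' lN' rN' (\<phi> (1, m, 0, 0))) \<and>
         (\<exists>a2' v2. \<forall>m. \<phi> (1, m, 0, 0) = (0, a2', v2 m, 1))"
proof -
  note band = iso_images_left_zero[OF assms(5,6,9)]
  obtain m1 a b where e1: "\<phi> (1, m1, 0, 0) = (0, a, b, 1)"
    using assms(10) unfolding type2_idem_def by blast
  define v2 where "v2 m = fst (snd (snd (\<phi> (1, m, 0, 0))))" for m
  have shape: "\<phi> (1, m, 0, 0) = (0, a, v2 m, 1)" for m
    using absorbed_by_type2[OF assms(7)] band[of m1 m] band[of m m1]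
    unfolding e1 v2_def by metis
  have "type2_idem lM' rM' lN' rN' (\<phi> (1, m, 0, 0))" for m
    unfolding type2_idem_def mc_idem_def using band[of m m] shape[of m] by blast
  with shape show ?thesis by blast
qed

end
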